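(* Consider the stochastic quadratic problem in the context, and let $\eta_0,\dots,\eta_T$ be any deterministic learning rates. Run SGD $w_{t+1}=w_t-\eta_t(H(\xi_t)w_t-b(\xi_t))$ for $t=0,\dots,T$ from a deterministic $w_0$. Assume $\mathbb{E}_\xi[n_tn_t^\top]\preceq\sigma^2H$ for all $t$, and let $P_t=I-\eta_tH$. Let $\lambda_1,\dots,\lambda_d$ be the eigenvalues of $H$. Then $$\sum_{\tau=0}^T\mathbb{E}\left[\eta_\tau^2\,n_\tau^\top P_T\cdots P_{\tau+1}HP_{\tau+1}\cdots P_T\,n_\tau\right]\le\sigma^2\sum_{j=1}^d\lambda_j^2\sum_{k=0}^T\eta_k^2\prod_{i=k+1}^T(1-\eta_i\lambda_j)^2 .$$
   Context: Let $\xi$ be a random data sample, $H(\xi)\in\mathbb{R}^{d\times d}$ a random symmetric matrix and $b(\xi)\in\mathbb{R}^d$ a random vector. Define $f(w,\xi)=\frac12w^\top H(\xi)w-b(\xi)^\top w$. Set $H=\mathbb{E}H(\xi)$, assumed positive definite, and $b=\mathbb{E}b(\xi)$, with $w_*=H^{-1}b$. The samples $\xi_t$ are i.i.d. copies of $\xi$, and $n_t=(Hw_t-b)-(H(\xi_t)w_t-b(\xi_t))$. *)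

theory Defs
  imports "HOL-Probability.Probability" "Jordan_Normal_Form.Char_Poly"
begin

unbundle no vec_syntax
unbundle no inner_syntax
no_notation Finite_Cartesian_Product.matrix_vector_mult (infixl \<open>*v\<close> 70)

definition loewner_le :: "nat \<Rightarrow> real mat \<Rightarrow> real mat \<Rightarrow> bool" where
  "loewner_le d A B \<longleftrightarrow> (\<forall>x \<in> carrier_vec d. x \<bullet> ((B - A) *\<^sub>v x) \<ge> 0)"

definition pos_def_mat :: "nat \<Rightarrow> real mat \<Rightarrow> bool" where
  "pos_def_mat d A \<longleftrightarrow> A \<in> carrier_mat d d \<and> A\<^sup>T = A \<and>
     (\<forall>x \<in> carrier_vec d. x \<noteq> 0\<^sub>v d \<longrightarrow> x \<bullet> (A *\<^sub>v x) > 0)"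

fun mprod :: "nat \<Rightarrow> real mat list \<Rightarrow> real mat" where
  "mprod d [] = 1\<^sub>m d"
| "mprod d (A # As) = A * mprod d As"

primrec sgd :: "real vec \<Rightarrow> (nat \<Rightarrow> real) \<Rightarrow> ('s \<Rightarrow> real mat) \<Rightarrow> ('s \<Rightarrow> real vec)
    \<Rightarrow> (nat \<Rightarrow> 'a \<Rightarrow> 's) \<Rightarrow> nat \<Rightarrow> 'a \<Rightarrow> real vec" where
  "sgd w0 \<eta> Hs bs \<xi> 0 \<omega> = w0"
| "sgd w0 \<eta> Hs bs \<xi> (Suc t) \<omega> =
     sgd w0 \<eta> Hs bs \<xi> t \<omega> - \<eta> t \<cdot>\<^sub>v (Hs (\<xi> t \<omega>) *\<^sub>v sgd w0 \<eta> Hs bs \<xi> t \<omega> - bs (\<xi> t \<omega>))"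

definition noise :: "real mat \<Rightarrow> real vec \<Rightarrow> real vec \<Rightarrow> (nat \<Rightarrow> real) \<Rightarrow> ('s \<Rightarrow> real mat)
    \<Rightarrow> ('s \<Rightarrow> real vec) \<Rightarrow> (nat \<Rightarrow> 'a \<Rightarrow> 's) \<Rightarrow> nat \<Rightarrow> 'a \<Rightarrow> real vec" where
  "noise H b w0 \<eta> Hs bs \<xi> t \<omega> =
     (H *\<^sub>v sgd w0 \<eta> Hs bs \<xi> t \<omega> - b) - (Hs (\<xi> t \<omega>) *\<^sub>v sgd w0 \<eta> Hs bs \<xi> t \<omega> - bs (\<xi> t \<omega>))"

definition Pmat :: "nat \<Rightarrow> real mat \<Rightarrow> (nat \<Rightarrow> real) \<Rightarrow> nat \<Rightarrow> real mat" where
  "Pmat d H \<eta> t = 1\<^sub>m d - \<eta> t \<cdot>\<^sub>m H"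

end

theory Submission
  imports Defs "Jordan_Normal_Form.Schur_Decomposition"
begin

text \<open>Write A_\<tau> = P_T \<cdots> P_{\<tau>+1} H P_{\<tau>+1} \<cdots> P_T. The \<tau>-th expectation is the Frobenius
  product of A_\<tau> with the noise covariance C_\<tau>. Since A_\<tau> and \<sigma>^2 H - C_\<tau> are positive
  semidefinite, and the Frobenius product of two such matrices is nonnegative (write one of them
  as a sum of squares by symmetric Gaussian elimination), the expectation is at most
  \<sigma>^2 tr(A_\<tau> H). Every factor P_i is affine in H, so a Schur triangularisation H = P B P^-1
  turns A_\<tau> H into an upper triangular matrix with diagonal \<lambda>_j^2 \<Prod>_i (1 - \<eta>_i \<lambda>_j)^2,
  whose trace is the right-hand side.\<close>

definition bilin_form ::
    "nat \<Rightarrow> (nat \<Rightarrow> nat \<Rightarrow> real) \<Rightarrow> (nat \<Rightarrow> real) \<Rightarrow> (nat \<Rightarrow> real) \<Rightarrow> real" where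
  "bilin_form n a x y = (\<Sum>i<n. \<Sum>j<n. x i * a i j * y j)"

definition psd_form :: "nat \<Rightarrow> (nat \<Rightarrow> nat \<Rightarrow> real) \<Rightarrow> bool" where
  "psd_form n a \<longleftrightarrow> (\<forall>i<n. \<forall>j<n. a i j = a j i) \<and> (\<forall>x. 0 \<le> bilin_form n a x x)"

lemma bilin_form_commute:
  assumes "\<And>i j. i < n \<Longrightarrow> j < n \<Longrightarrow> a i j = a j i"
  shows "bilin_form n a y x = bilin_form n a x y"
  unfolding bilin_form_def by (subst sum.swap) (auto intro!: sum.cong simp: assms)

lemma bilin_form_add_scaled:
  assumes "\<And>i j. i < n \<Longrightarrow> j < n \<Longrightarrow> a i j = a j i"
  shows "bilin_form n a (\<lambda>i. x i + t * y i) (\<lambda>i. x i + t * y i)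
    = bilin_form n a x x + 2 * t * bilin_form n a x y + t\<^sup>2 * bilin_form n a y y"
proof -
  have "bilin_form n a (\<lambda>i. x i + t * y i) (\<lambda>i. x i + t * y i)
      = bilin_form n a x x + t * bilin_form n a x y + t * bilin_form n a y x + t\<^sup>2 * bilin_form n a y y"
    unfolding bilin_form_def
    by (simp add: algebra_simps sum.distrib sum_distrib_left power2_eq_square)
  then show ?thesis
    using bilin_form_commute[OF assms] by simp
qed

lemma bilin_form_unit_right:
  "k < n \<Longrightarrow> bilin_form n a x (\<lambda>j. if j = k then 1 else 0) = (\<Sum>i<n. x i * a i k)"
  unfolding bilin_form_def by (simp add: if_distrib cong: if_cong)

lemma bilin_form_unit_left:
  "k < n \<Longrightarrow> bilin_form n a (\<lambda>i. if i = k then 1 else 0) y = (\<Sum>j<n. a k j * y j)"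
proof -
  assume "k < n"
  have "(\<Sum>j<n. (if i = k then 1 else 0) * a i j * y j) = (if i = k then \<Sum>j<n. a k j * y j else 0)" for i
    by simp
  then show ?thesis
    unfolding bilin_form_def using \<open>k < n\<close> by simp
qed

lemma bilin_form_units:
  "i < n \<Longrightarrow> j < n \<Longrightarrow>
    bilin_form n a (\<lambda>l. if l = i then 1 else 0) (\<lambda>l. if l = j then 1 else 0) = a i j"
  by (simp add: bilin_form_unit_left if_distrib cong: if_cong)

text \<open>Otherwise t \<mapsto> Q(x + t y) = Q(x) + 2 t B(x, y) would be affine with nonzero slope
  and hence take negative values.\<close>
lemma psd_form_bilin_eq_0:
  assumes psd: "psd_form n a" and y: "bilin_form n a y y = 0"
  shows "bilin_form n a x y = 0"
proof (rule ccontr)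
  assume nz: "bilin_form n a x y \<noteq> 0"
  define t where "t = - (bilin_form n a x x + 1) / (2 * bilin_form n a x y)"
  have "bilin_form n a (\<lambda>i. x i + t * y i) (\<lambda>i. x i + t * y i)
      = bilin_form n a x x + 2 * t * bilin_form n a x y"
    using bilin_form_add_scaled[of n a x t y] psd y unfolding psd_form_def by simp
  also have "\<dots> = -1"
    using nz unfolding t_def by (simp add: field_simps)
  finally show False
    using psd unfolding psd_form_def by (metis neg_0_le_iff_le not_one_le_zero)
qed

lemma psd_form_diag_eq_0:
  assumes psd: "psd_form n a" and k: "k < n" and "a k k = 0" and j: "j < n"
  shows "a j k = 0"
proof -
  have "bilin_form n a (\<lambda>l. if l = j then 1 else 0) (\<lambda>l. if l = k then 1 else 0) = 0"
    using psd_form_bilin_eq_0[OF psd] bilin_form_units[OF k k, of a] \<open>a k k = 0\<close> by simp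
  then show ?thesis
    using bilin_form_units[OF j k] by simp
qed

lemma psd_form_schur_complement:
  assumes psd: "psd_form n a" and k: "k < n" and c: "0 < a k k"
  shows "psd_form n (\<lambda>i j. a i j - a i k * a k j / a k k)"
  unfolding psd_form_def
proof (intro conjI allI impI)
  have sym: "\<And>i j. i < n \<Longrightarrow> j < n \<Longrightarrow> a i j = a j i"
    using psd unfolding psd_form_def by auto
  then show "a i j - a i k * a k j / a k k = a j i - a j k * a k i / a k k" if "i < n" "j < n" for i j
    using that k by (simp add: mult.commute)
  fix x
  define e where "e = (\<lambda>i::nat. if i = k then 1 else (0::real))"
  define s where "s = (\<Sum>i<n. x i * a i k)"
  have s': "(\<Sum>j<n. a k j * x j) = s"
    unfolding s_def using sym k by (auto intro!: sum.cong simp: mult.commute)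
  have "bilin_form n (\<lambda>i j. a i j - a i k * a k j / a k k) x x
      = bilin_form n a x x - (\<Sum>i<n. x i * a i k) * (\<Sum>j<n. a k j * x j) / a k k"
    unfolding bilin_form_def by (simp add: algebra_simps sum_subtractf sum_divide_distrib sum_product)
  \<comment> \<open>completing the square in the direction of the k-th unit vector\<close>
  also have "\<dots> = bilin_form n a (\<lambda>i. x i + (- s / a k k) * e i) (\<lambda>i. x i + (- s / a k k) * e i)"
    using bilin_form_add_scaled[of n a x "- s / a k k" e, OF sym] bilin_form_units[OF k k, of a]
      bilin_form_unit_right[OF k, of a x] c
    unfolding s' s_def[symmetric] e_def by (simp add: field_simps power2_eq_square)
  finally show "0 \<le> bilin_form n (\<lambda>i j. a i j - a i k * a k j / a k k) x x"
    using psd unfolding psd_form_def by simp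
qed

text \<open>Symmetric Gaussian elimination: the matrix is supported on [k, n) \<times> [k, n), and
  subtracting the rank-one term a_{ik} a_{kj} / a_{kk} clears row and column k.\<close>
lemma psd_form_sum_squares_from:
  assumes "k \<le> n" and "psd_form n a"
    and "\<And>i j. i < n \<Longrightarrow> j < n \<Longrightarrow> i < k \<or> j < k \<Longrightarrow> a i j = 0"
  shows "\<exists>m (v :: nat \<Rightarrow> nat \<Rightarrow> real). \<forall>i<n. \<forall>j<n. a i j = (\<Sum>l<m. v l i * v l j)"
  using assms
proof (induction k arbitrary: a rule: inc_induct)
  case base
  then show ?case
    by (intro exI[of _ 0]) auto
next
  case (step k)
  have sym: "\<And>i j. i < n \<Longrightarrow> j < n \<Longrightarrow> a i j = a j i"
    and "0 \<le> bilin_form n a (\<lambda>l. if l = k then 1 else 0) (\<lambda>l. if l = k then 1 else 0)"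
    using step.prems(1) unfolding psd_form_def by auto
  then have "0 \<le> a k k"
    using bilin_form_units[OF step.hyps(2) step.hyps(2)] by simp
  then consider "a k k = 0" | "0 < a k k"
    by linarith
  then show ?case
  proof cases
    case 1
    have "a i j = 0" if "i < n" "j < n" "i < Suc k \<or> j < Suc k" for i j
      using that step.prems(2) psd_form_diag_eq_0[OF step.prems(1) step.hyps(2) 1] sym[of k]
      by (metis less_Suc_eq)
    then show ?thesis
      using step.IH step.prems(1) by blast
  next
    case 2
    define a' where "a' i j = a i j - a i k * a k j / a k k" for i j
    have "a' i j = 0" if "i < n" "j < n" "i < Suc k \<or> j < Suc k" for i j
      using that step.prems(2)[of i j] step.prems(2)[of i k] step.prems(2)[of k j] step.hyps(2) 2 sym
      unfolding a'_def by (auto simp: less_Suc_eq)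
    then obtain m and v :: "nat \<Rightarrow> nat \<Rightarrow> real"
      where v: "\<forall>i<n. \<forall>j<n. a' i j = (\<Sum>l<m. v l i * v l j)"
      using step.IH psd_form_schur_complement[OF step.prems(1) step.hyps(2) 2]
      unfolding a'_def by blast
    define u where "u i = a i k / sqrt (a k k)" for i
    have "a i j = (\<Sum>l<Suc m. case_nat u v l i * case_nat u v l j)" if "i < n" "j < n" for i j
    proof -
      have "a i j = a' i j + u i * u j"
        unfolding a'_def u_def using 2 sym[OF step.hyps(2) that(2)] by (simp add: field_simps)
      then show ?thesis
        using v that by (subst sum.lessThan_Suc_shift) simp
    qed
    then show ?thesis
      by blast
  qed
qed

lemma psd_form_sum_squares:
  assumes "psd_form n a"
  obtains m :: nat and v :: "nat \<Rightarrow> nat \<Rightarrow> real"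
  where "\<And>i j. i < n \<Longrightarrow> j < n \<Longrightarrow> a i j = (\<Sum>l<m. v l i * v l j)"
  using psd_form_sum_squares_from[of 0 n a] assms that by blast

lemma psd_form_frobenius_nonneg:
  assumes "psd_form n b" and "\<And>x. 0 \<le> bilin_form n a x x"
  shows "0 \<le> (\<Sum>i<n. \<Sum>j<n. a i j * b i j)"
proof -
  obtain m :: nat and v :: "nat \<Rightarrow> nat \<Rightarrow> real"
    where b: "\<And>i j. i < n \<Longrightarrow> j < n \<Longrightarrow> b i j = (\<Sum>l<m. v l i * v l j)"
    using psd_form_sum_squares[OF assms(1)] by metis
  have "(\<Sum>i<n. \<Sum>j<n. a i j * b i j) = (\<Sum>i<n. \<Sum>j<n. \<Sum>l<m. v l i * a i j * v l j)"
    using b by (simp add: sum_distrib_left mult_ac)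
  also have "\<dots> = (\<Sum>l<m. bilin_form n a (v l) (v l))"
    unfolding bilin_form_def by (simp add: sum.swap[of _ _ "{..<m}"])
  also have "\<dots> \<ge> 0"
    using assms(2) by (simp add: sum_nonneg)
  finally show ?thesis .
qed

definition psd_mat :: "nat \<Rightarrow> real mat \<Rightarrow> bool" where
  "psd_mat n A \<longleftrightarrow> (\<forall>x \<in> carrier_vec n. 0 \<le> x \<bullet> (A *\<^sub>v x))"

lemma scalar_prod_mult_mat_vec_eq_bilin_form:
  assumes "A \<in> carrier_mat n n" and "x \<in> carrier_vec n" and "y \<in> carrier_vec n"
  shows "x \<bullet> (A *\<^sub>v y) = bilin_form n (\<lambda>i j. A $$ (i, j)) (($) x) (($) y)"
  using assms
  by (auto simp: bilin_form_def scalar_prod_def atLeast0LessThan sum_distrib_left mult.assoc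
      intro!: sum.cong)

lemma bilin_form_vec:
  "bilin_form n a (($) (vec n x)) (($) (vec n y)) = bilin_form n a x y"
  unfolding bilin_form_def by (auto intro!: sum.cong)

lemma psd_mat_bilin_form_nonneg:
  assumes "A \<in> carrier_mat n n" and "psd_mat n A"
  shows "0 \<le> bilin_form n (\<lambda>i j. A $$ (i, j)) x x"
proof -
  have "0 \<le> vec n x \<bullet> (A *\<^sub>v vec n x)"
    using assms(2) unfolding psd_mat_def by simp
  then show ?thesis
    using scalar_prod_mult_mat_vec_eq_bilin_form[OF assms(1), of "vec n x" "vec n x"]
    by (simp add: bilin_form_vec)
qed

lemma psd_mat_transpose_mult_mult:
  assumes M: "M \<in> carrier_mat n n" and H: "H \<in> carrier_mat n n" and "psd_mat n H"
  shows "psd_mat n (M\<^sup>T * H * M)"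
  unfolding psd_mat_def
proof
  fix x :: "real vec"
  assume x: "x \<in> carrier_vec n"
  define y where "y = H *\<^sub>v (M *\<^sub>v x)"
  have y: "y \<in> carrier_vec n"
    unfolding y_def using H M x by simp
  have "x \<bullet> ((M\<^sup>T * H * M) *\<^sub>v x) = x \<bullet> (M\<^sup>T *\<^sub>v y)"
    unfolding y_def using M H x by (simp add: assoc_mult_mat_vec[of _ n n _ n])
  also have "\<dots> = (M\<^sup>T *\<^sub>v y) \<bullet> x"
    using M y by (intro comm_scalar_prod[OF x]) simp
  also have "\<dots> = y \<bullet> (M *\<^sub>v x)"
    by (rule transpose_vec_mult_scalar[OF M x y])
  also have "\<dots> = (M *\<^sub>v x) \<bullet> (H *\<^sub>v (M *\<^sub>v x))"
    unfolding y_def using M x by (intro comm_scalar_prod[OF y[unfolded y_def]]) simp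
  finally show "0 \<le> x \<bullet> ((M\<^sup>T * H * M) *\<^sub>v x)"
    using \<open>psd_mat n H\<close> M x unfolding psd_mat_def by simp
qed

definition trace_mat :: "'a :: comm_ring_1 mat \<Rightarrow> 'a" where
  "trace_mat A = (\<Sum>i<dim_row A. A $$ (i, i))"

lemma index_mult_mat_sum:
  assumes "A \<in> carrier_mat n m" and "B \<in> carrier_mat m k" and "i < n" and "j < k"
  shows "(A * B) $$ (i, j) = (\<Sum>l<m. A $$ (i, l) * B $$ (l, j))"
  using assms by (auto simp: scalar_prod_def atLeast0LessThan intro!: sum.cong)

lemma trace_mat_smult:
  "A \<in> carrier_mat n n \<Longrightarrow> trace_mat (c \<cdot>\<^sub>m A) = c * trace_mat A"
  unfolding trace_mat_def by (auto simp: sum_distrib_left)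

lemma trace_mat_mult:
  assumes A: "A \<in> carrier_mat n m" and B: "B \<in> carrier_mat m n"
  shows "trace_mat (A * B) = (\<Sum>i<n. \<Sum>l<m. A $$ (i, l) * B $$ (l, i))"
  unfolding trace_mat_def using A B by (auto intro!: sum.cong simp: scalar_prod_def atLeast0LessThan)

lemma trace_mat_mult_comm:
  assumes A: "A \<in> carrier_mat n m" and B: "B \<in> carrier_mat m n"
  shows "trace_mat (A * B) = trace_mat (B * A)"
  unfolding trace_mat_mult[OF A B] trace_mat_mult[OF B A]
  by (subst sum.swap) (simp add: mult.commute)

lemma similar_mat_wit_trace_mat:
  assumes "similar_mat_wit A B P Q"
  shows "trace_mat A = trace_mat B"
proof -
  define n where "n = dim_row A"
  note wit = similar_mat_witD[OF n_def assms]
  have "trace_mat A = trace_mat ((P * B) * Q)"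
    using wit(3) by simp
  also have "\<dots> = trace_mat (Q * (P * B))"
    using wit(5-7) by (intro trace_mat_mult_comm) auto
  also have "Q * (P * B) = B"
    using wit(2,5-7) by (simp flip: assoc_mult_mat[of _ n n _ n _ n])
  finally show ?thesis .
qed

lemma similar_mat_wit_one:
  assumes "similar_mat_wit A B P Q" and "A \<in> carrier_mat n n"
  shows "similar_mat_wit (1\<^sub>m n) (1\<^sub>m n) P Q"
  using similar_mat_witD2[OF assms(2,1)] by (intro similar_mat_witI[of P Q n]) auto

lemma similar_mat_wit_add:
  assumes AB: "similar_mat_wit A B P Q" and AB': "similar_mat_wit A' B' P Q"
    and "A \<in> carrier_mat n n" and "A' \<in> carrier_mat n n"
  shows "similar_mat_wit (A + A') (B + B') P Q"
proof -
  note wit = similar_mat_witD2[OF assms(3) AB] and wit' = similar_mat_witD2[OF assms(4) AB']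
  have "P * (B + B') * Q = P * B * Q + P * B' * Q"
    using wit wit' by (simp add: mult_add_distrib_mat add_mult_distrib_mat[of _ n n])
  then show ?thesis
    using wit wit' by (intro similar_mat_witI[of P Q n]) auto
qed

lemma similar_mat_wit_mult:
  assumes AB: "similar_mat_wit A B P Q" and AB': "similar_mat_wit A' B' P Q"
    and "A \<in> carrier_mat n n" and "A' \<in> carrier_mat n n"
  shows "similar_mat_wit (A * A') (B * B') P Q"
proof -
  note wit = similar_mat_witD2[OF assms(3) AB] and wit' = similar_mat_witD2[OF assms(4) AB']
  have "A * A' = P * (B * (Q * (P * (B' * Q))))"
    using wit wit' by (simp add: assoc_mult_mat[of _ n n _ n _ n])
  also have "Q * (P * (B' * Q)) = B' * Q"
    using wit wit' by (metis assoc_mult_mat left_mult_one_mat mult_carrier_mat)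
  also have "P * (B * (B' * Q)) = P * (B * B') * Q"
    using wit wit' by (simp add: assoc_mult_mat[of _ n n _ n _ n])
  finally show ?thesis
    using wit wit' by (intro similar_mat_witI[of P Q n]) auto
qed

lemma upper_triangular_mult:
  assumes A: "A \<in> carrier_mat n n" and B: "B \<in> carrier_mat n n"
    and "upper_triangular A" and "upper_triangular B"
  shows "upper_triangular (A * B)"
proof (rule upper_triangularI)
  fix i j
  assume ji: "j < i" and "i < dim_row (A * B)"
  then have i: "i < n" and j: "j < n"
    using A by auto
  have "A $$ (i, l) * B $$ (l, j) = 0" if "l < n" for l
  proof (cases "l < i")
    case True
    then show ?thesis
      using upper_triangularD[OF assms(3) True] i A by simp
  next
    case False
    then show ?thesis
      using upper_triangularD[OF assms(4), of j l] ji that B by simp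
  qed
  then show "(A * B) $$ (i, j) = 0"
    unfolding index_mult_mat_sum[OF A B i j] by (intro sum.neutral) simp
qed

lemma diag_mult_upper_triangular:
  assumes A: "A \<in> carrier_mat n n" and B: "B \<in> carrier_mat n n"
    and "upper_triangular A" and "upper_triangular B" and j: "j < n"
  shows "(A * B) $$ (j, j) = A $$ (j, j) * B $$ (j, j)"
proof -
  have "A $$ (j, l) * B $$ (l, j) = 0" if "l < n" and "l \<noteq> j" for l
  proof (cases "l < j")
    case True
    then show ?thesis
      using upper_triangularD[OF assms(3) True] j A by simp
  next
    case False
    with \<open>l \<noteq> j\<close> have "j < l"
      by simp
    then show ?thesis
      using upper_triangularD[OF assms(4)] that B by simp
  qed
  then have "(\<Sum>l<n. A $$ (j, l) * B $$ (l, j)) = (\<Sum>l\<in>{j}. A $$ (j, l) * B $$ (l, j))"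
    using j by (intro sum.mono_neutral_right) auto
  then show ?thesis
    unfolding index_mult_mat_sum[OF A B j j] by simp
qed

lemma mprod_carrier:
  "set As \<subseteq> carrier_mat d d \<Longrightarrow> mprod d As \<in> carrier_mat d d"
  by (induction As) auto

lemma mprod_append:
  assumes "set As \<subseteq> carrier_mat d d" and Bs: "set Bs \<subseteq> carrier_mat d d"
  shows "mprod d (As @ Bs) = mprod d As * mprod d Bs"
  using assms(1)
proof (induction As)
  case Nil
  show ?case
    using mprod_carrier[OF Bs] by simp
next
  case (Cons A As)
  then show ?case
    using mprod_carrier[OF Bs] mprod_carrier[of As d] by (simp add: assoc_mult_mat[of _ d d _ d _ d])
qed

lemma mprod_transpose:
  "set As \<subseteq> carrier_mat d d \<Longrightarrow> (mprod d As)\<^sup>T = mprod d (rev (map transpose_mat As))"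
proof (induction As)
  case (Cons A As)
  then have A: "A \<in> carrier_mat d d" and As: "set As \<subseteq> carrier_mat d d"
    by auto
  have "(mprod d (A # As))\<^sup>T = (mprod d As)\<^sup>T * A\<^sup>T"
    using transpose_mult[OF A mprod_carrier[OF As]] by simp
  also have "\<dots> = mprod d (rev (map transpose_mat As)) * mprod d [A\<^sup>T]"
    using Cons A As by simp
  also have "\<dots> = mprod d (rev (map transpose_mat As) @ [A\<^sup>T])"
    using A As by (intro mprod_append[symmetric]) auto
  finally show ?case
    by simp
qed simp

lemma mprod_upper_triangular:
  assumes "\<And>U. U \<in> set Us \<Longrightarrow> U \<in> carrier_mat d d \<and> upper_triangular U"
  shows "upper_triangular (mprod d Us) \<and>
    (\<forall>j<d. mprod d Us $$ (j, j) = (\<Prod>U\<leftarrow>Us. U $$ (j, j)))"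
  using assms
proof (induction Us)
  case (Cons U Us)
  then have U: "U \<in> carrier_mat d d" "upper_triangular U" and Us: "set Us \<subseteq> carrier_mat d d"
    by auto
  note M = mprod_carrier[OF Us]
  show ?case
    using Cons upper_triangular_mult[OF U(1) M U(2)] diag_mult_upper_triangular[OF U(1) M U(2)]
    by simp
qed simp

lemma similar_mat_wit_mprod:
  assumes "similar_mat_wit H B P Q" and H: "H \<in> carrier_mat d d"
    and "\<And>x. x \<in> set xs \<Longrightarrow> similar_mat_wit (f x) (g x) P Q \<and> f x \<in> carrier_mat d d"
  shows "similar_mat_wit (mprod d (map f xs)) (mprod d (map g xs)) P Q"
  using assms(3)
proof (induction xs)
  case Nil
  show ?case
    using similar_mat_wit_one[OF assms(1) H] by simp
next
  case (Cons x xs)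
  then show ?case
    using mprod_carrier[of "map f xs" d]
    by (auto intro!: similar_mat_wit_mult[where n = d])
qed

lemma prod_list_map_upt:
  fixes f :: "nat \<Rightarrow> 'a :: comm_monoid_mult"
  shows "(\<Prod>i\<leftarrow>[m..<n]. f i) = (\<Prod>i\<in>{m..<n}. f i)"
  by (metis distinct_upt prod.distinct_set_conv_list set_upt)

lemma trace_mprod_affine:
  fixes H :: "real mat" and fs :: "(real \<times> real) list"
  assumes H: "H \<in> carrier_mat d d" and cp: "char_poly H = (\<Prod>j<d. [:- lam j, 1:])"
  shows "trace_mat (mprod d (map (\<lambda>(a, c). a \<cdot>\<^sub>m 1\<^sub>m d + c \<cdot>\<^sub>m H) fs))
    = (\<Sum>j<d. \<Prod>(a, c)\<leftarrow>fs. a + c * lam j)"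
proof -
  have "char_poly H = (\<Prod>e\<leftarrow>map lam [0..<d]. [:- e, 1:])"
    unfolding cp by (simp add: prod_list_map_upt atLeast0LessThan o_def)
  moreover obtain B P Q where schur: "schur_decomposition H (map lam [0..<d]) = (B, P, Q)"
    by (cases "schur_decomposition H (map lam [0..<d])") auto
  ultimately have sim: "similar_mat_wit H B P Q" and B_ut: "upper_triangular B"
    and "diag_mat B = map lam [0..<d]"
    using schur_decomposition[OF H] by blast+
  note wit = similar_mat_witD2[OF H sim]
  then have B_diag: "B $$ (j, j) = lam j" if "j < d" for j
    using \<open>diag_mat B = map lam [0..<d]\<close> that unfolding diag_mat_def by (simp add: map_eq_conv)
  define affB where "affB = (\<lambda>(a, c). a \<cdot>\<^sub>m 1\<^sub>m d + c \<cdot>\<^sub>m B)"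
  have "similar_mat_wit (a \<cdot>\<^sub>m 1\<^sub>m d + c \<cdot>\<^sub>m H) (a \<cdot>\<^sub>m 1\<^sub>m d + c \<cdot>\<^sub>m B) P Q" for a c
    using H by (intro similar_mat_wit_add[where n = d] similar_mat_wit_smult
        similar_mat_wit_one[OF sim H] sim) auto
  then have "similar_mat_wit (mprod d (map (\<lambda>(a, c). a \<cdot>\<^sub>m 1\<^sub>m d + c \<cdot>\<^sub>m H) fs))
      (mprod d (map affB fs)) P Q"
    unfolding affB_def using H by (intro similar_mat_wit_mprod[OF sim H]) auto
  then have "trace_mat (mprod d (map (\<lambda>(a, c). a \<cdot>\<^sub>m 1\<^sub>m d + c \<cdot>\<^sub>m H) fs))
      = trace_mat (mprod d (map affB fs))"
    by (rule similar_mat_wit_trace_mat)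
  also have "\<dots> = (\<Sum>j<d. \<Prod>U\<leftarrow>map affB fs. U $$ (j, j))"
  proof -
    have "U \<in> carrier_mat d d \<and> upper_triangular U" if "U \<in> set (map affB fs)" for U
      using that wit B_ut unfolding affB_def by (auto intro!: upper_triangularI dest: upper_triangularD)
    then have "\<forall>j<d. mprod d (map affB fs) $$ (j, j) = (\<Prod>U\<leftarrow>map affB fs. U $$ (j, j))"
      and "mprod d (map affB fs) \<in> carrier_mat d d"
      using mprod_upper_triangular[of "map affB fs" d] mprod_carrier[of "map affB fs" d] by auto
    then show ?thesis
      unfolding trace_mat_def by simp
  qed
  also have "\<dots> = (\<Sum>j<d. \<Prod>(a, c)\<leftarrow>fs. a + c * lam j)"
    using wit B_diag unfolding affB_def by (intro sum.cong refl arg_cong[where f = prod_list]) auto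
  finally show ?thesis .
qed

lemma integral_scalar_prod_mult_mat_vec:
  fixes x :: "'a \<Rightarrow> real vec"
  assumes A: "A \<in> carrier_mat n n" and x: "\<And>\<omega>. x \<omega> \<in> carrier_vec n"
    and int: "\<And>i j. i < n \<Longrightarrow> j < n \<Longrightarrow> integrable M (\<lambda>\<omega>. x \<omega> $ i * x \<omega> $ j)"
  shows "(\<integral>\<omega>. x \<omega> \<bullet> (A *\<^sub>v x \<omega>) \<partial>M)
    = (\<Sum>i<n. \<Sum>j<n. A $$ (i, j) * (\<integral>\<omega>. x \<omega> $ i * x \<omega> $ j \<partial>M))"
proof -
  have int': "integrable M (\<lambda>\<omega>. A $$ (i, j) * (x \<omega> $ i * x \<omega> $ j))" if "i < n" "j < n" for i j
    using int[OF that] by (rule integrable_mult_right)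
  have "(\<integral>\<omega>. x \<omega> \<bullet> (A *\<^sub>v x \<omega>) \<partial>M)
      = (\<integral>\<omega>. (\<Sum>i<n. \<Sum>j<n. A $$ (i, j) * (x \<omega> $ i * x \<omega> $ j)) \<partial>M)"
    using scalar_prod_mult_mat_vec_eq_bilin_form[OF A x x] unfolding bilin_form_def
    by (simp add: mult_ac)
  also have "\<dots> = (\<Sum>i<n. \<integral>\<omega>. (\<Sum>j<n. A $$ (i, j) * (x \<omega> $ i * x \<omega> $ j)) \<partial>M)"
    using int' by (intro Bochner_Integration.integral_sum Bochner_Integration.integrable_sum) auto
  also have "\<dots> = (\<Sum>i<n. \<Sum>j<n. \<integral>\<omega>. A $$ (i, j) * (x \<omega> $ i * x \<omega> $ j) \<partial>M)"
    using int' by (intro sum.cong refl Bochner_Integration.integral_sum) auto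
  finally show ?thesis
    by simp
qed

lemma integral_quadratic_form_le_trace:
  fixes x :: "'a \<Rightarrow> real vec"
  assumes A: "A \<in> carrier_mat n n" "psd_mat n A"
    and K: "K \<in> carrier_mat n n" "K\<^sup>T = K"
    and x: "\<And>\<omega>. x \<omega> \<in> carrier_vec n"
    and int: "\<And>i j. i < n \<Longrightarrow> j < n \<Longrightarrow> integrable M (\<lambda>\<omega>. x \<omega> $ i * x \<omega> $ j)"
    and cov: "loewner_le n (mat n n (\<lambda>(i, j). \<integral>\<omega>. x \<omega> $ i * x \<omega> $ j \<partial>M)) K"
  shows "(\<integral>\<omega>. x \<omega> \<bullet> (A *\<^sub>v x \<omega>) \<partial>M) \<le> trace_mat (A * K)"
proof -
  define C where "C = mat n n (\<lambda>(i, j). \<integral>\<omega>. x \<omega> $ i * x \<omega> $ j \<partial>M)"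
  have C: "C \<in> carrier_mat n n"
    by (simp add: C_def)
  have K_sym: "K $$ (i, j) = K $$ (j, i)" if "i < n" "j < n" for i j
    using K that by (metis carrier_matD index_transpose_mat(1))
  have "psd_form n (\<lambda>i j. (K - C) $$ (i, j))"
    unfolding psd_form_def
  proof (intro conjI allI impI)
    show "(K - C) $$ (i, j) = (K - C) $$ (j, i)" if "i < n" "j < n" for i j
      using that K C K_sym by (simp add: C_def mult.commute)
    show "0 \<le> bilin_form n (\<lambda>i j. (K - C) $$ (i, j)) y y" for y
      using cov K C unfolding loewner_le_def C_def[symmetric]
      by (metis bilin_form_vec minus_carrier_mat scalar_prod_mult_mat_vec_eq_bilin_form vec_carrier)
  qed
  then have "0 \<le> (\<Sum>i<n. \<Sum>j<n. A $$ (i, j) * (K - C) $$ (i, j))"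
    using psd_mat_bilin_form_nonneg[OF A] by (rule psd_form_frobenius_nonneg)
  also have "\<dots> = (\<Sum>i<n. \<Sum>j<n. A $$ (i, j) * K $$ (i, j))
      - (\<Sum>i<n. \<Sum>j<n. A $$ (i, j) * C $$ (i, j))"
    using K C by (simp add: right_diff_distrib sum_subtractf)
  finally have "(\<Sum>i<n. \<Sum>j<n. A $$ (i, j) * C $$ (i, j)) \<le> (\<Sum>i<n. \<Sum>j<n. A $$ (i, j) * K $$ (i, j))"
    by simp
  also have "\<dots> = trace_mat (A * K)"
    unfolding trace_mat_mult[OF A(1) K(1)] using K_sym by (auto intro!: sum.cong)
  finally show ?thesis
    using integral_scalar_prod_mult_mat_vec[OF A(1) x int] by (simp add: C_def)
qed

lemma pos_def_mat_imp_psd_mat: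
  assumes "pos_def_mat n H"
  shows "psd_mat n H"
  unfolding psd_mat_def
proof
  fix x :: "real vec"
  assume x: "x \<in> carrier_vec n"
  show "0 \<le> x \<bullet> (H *\<^sub>v x)"
  proof (cases "x = 0\<^sub>v n")
    case True
    have "H *\<^sub>v x \<in> carrier_vec n"
      using assms x unfolding pos_def_mat_def by (blast intro: mult_mat_vec_carrier)
    then show ?thesis
      using True by simp
  next
    case False
    then show ?thesis
      using assms x unfolding pos_def_mat_def by (simp add: less_imp_le)
  qed
qed

lemma Pmat_carrier: "H \<in> carrier_mat d d \<Longrightarrow> Pmat d H \<eta> t \<in> carrier_mat d d"
  unfolding Pmat_def by (intro minus_carrier_mat) simp

lemma transpose_smult_mat: "(c \<cdot>\<^sub>m A)\<^sup>T = c \<cdot>\<^sub>m A\<^sup>T"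
  by (rule eq_matI) auto

lemma transpose_Pmat:
  "H \<in> carrier_mat d d \<Longrightarrow> H\<^sup>T = H \<Longrightarrow> (Pmat d H \<eta> t)\<^sup>T = Pmat d H \<eta> t"
  unfolding Pmat_def by (subst transpose_minus[of _ d d]) (auto simp: transpose_smult_mat)

lemma psd_mat_Pmat_sandwich:
  assumes H: "H \<in> carrier_mat d d" "H\<^sup>T = H" "psd_mat d H"
  shows "psd_mat d (mprod d (map (Pmat d H \<eta>) (rev ts)) * H * mprod d (map (Pmat d H \<eta>) ts))"
proof -
  have carrier: "set (map (Pmat d H \<eta>) ts) \<subseteq> carrier_mat d d"
    using H by (auto simp: Pmat_carrier)
  have "mprod d (map (Pmat d H \<eta>) (rev ts)) = (mprod d (map (Pmat d H \<eta>) ts))\<^sup>T"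
    unfolding mprod_transpose[OF carrier] using H by (simp add: rev_map o_def transpose_Pmat)
  then show ?thesis
    using psd_mat_transpose_mult_mult[OF mprod_carrier[OF carrier] H(1,3)] by simp
qed

lemma trace_Pmat_sandwich:
  assumes H: "H \<in> carrier_mat d d" and cp: "char_poly H = (\<Prod>j<d. [:- lam j, 1:])"
  shows "trace_mat (mprod d (map (Pmat d H \<eta>) (rev ts)) * H * mprod d (map (Pmat d H \<eta>) ts) * H)
    = (\<Sum>j<d. (lam j)\<^sup>2 * (\<Prod>t\<leftarrow>ts. 1 - \<eta> t * lam j)\<^sup>2)"
proof -
  define aff where "aff = (\<lambda>(a, c). a \<cdot>\<^sub>m 1\<^sub>m d + c \<cdot>\<^sub>m H)"
  define fs where "fs = map (\<lambda>t. (1 :: real, - \<eta> t)) ts"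
  have Pmat_aff: "map (Pmat d H \<eta>) ts' = map aff (map (\<lambda>t. (1 :: real, - \<eta> t)) ts')" for ts'
    unfolding aff_def Pmat_def using H by (auto intro!: eq_matI)
  have H_aff: "H = aff (0, 1)"
    unfolding aff_def using H by (auto intro!: eq_matI)
  have carrier: "set (map aff xs) \<subseteq> carrier_mat d d" for xs
    unfolding aff_def using H by auto
  have "mprod d (Xs @ [H] @ Ys @ [H]) = mprod d Xs * H * mprod d Ys * H"
    if "set Xs \<subseteq> carrier_mat d d" "set Ys \<subseteq> carrier_mat d d" for Xs Ys
    using that H mprod_carrier[OF that(1)] mprod_carrier[OF that(2)]
    by (simp add: mprod_append assoc_mult_mat[of _ d d _ d _ d])
  from this[OF carrier carrier, of "rev fs" fs]
  have "mprod d (map (Pmat d H \<eta>) (rev ts)) * H * mprod d (map (Pmat d H \<eta>) ts) * H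
      = mprod d (map aff (rev fs @ [(0, 1)] @ fs @ [(0, 1)]))"
    unfolding Pmat_aff fs_def by (simp add: rev_map H_aff[symmetric])
  also have "trace_mat \<dots> = (\<Sum>j<d. \<Prod>(a, c)\<leftarrow>rev fs @ [(0, 1)] @ fs @ [(0, 1)]. a + c * lam j)"
    unfolding aff_def by (rule trace_mprod_affine[OF H cp])
  also have "\<dots> = (\<Sum>j<d. (lam j)\<^sup>2 * (\<Prod>t\<leftarrow>ts. 1 - \<eta> t * lam j)\<^sup>2)"
    unfolding fs_def by (simp add: o_def power2_eq_square mult_ac flip: rev_map)
  finally show ?thesis .
qed

lemma integral_Pmat_sandwich_le:
  fixes x :: "'a \<Rightarrow> real vec"
  assumes H: "H \<in> carrier_mat d d" "H\<^sup>T = H" "psd_mat d H"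
    and cp: "char_poly H = (\<Prod>j<d. [:- lam j, 1:])"
    and x: "\<And>\<omega>. x \<omega> \<in> carrier_vec d"
    and int: "\<And>i j. i < d \<Longrightarrow> j < d \<Longrightarrow> integrable M (\<lambda>\<omega>. x \<omega> $ i * x \<omega> $ j)"
    and cov: "loewner_le d (mat d d (\<lambda>(i, j). \<integral>\<omega>. x \<omega> $ i * x \<omega> $ j \<partial>M)) (\<sigma>\<^sup>2 \<cdot>\<^sub>m H)"
  shows "(\<integral>\<omega>. x \<omega> \<bullet> ((mprod d (map (Pmat d H \<eta>) (rev ts)) * H * mprod d (map (Pmat d H \<eta>) ts))
      *\<^sub>v x \<omega>) \<partial>M) \<le> \<sigma>\<^sup>2 * (\<Sum>j<d. (lam j)\<^sup>2 * (\<Prod>t\<leftarrow>ts. 1 - \<eta> t * lam j)\<^sup>2)"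
proof -
  define A where "A = mprod d (map (Pmat d H \<eta>) (rev ts)) * H * mprod d (map (Pmat d H \<eta>) ts)"
  have A: "A \<in> carrier_mat d d"
    unfolding A_def using H by (auto intro!: mult_carrier_mat mprod_carrier simp: Pmat_carrier)
  have "(\<integral>\<omega>. x \<omega> \<bullet> (A *\<^sub>v x \<omega>) \<partial>M) \<le> trace_mat (A * (\<sigma>\<^sup>2 \<cdot>\<^sub>m H))"
    using A H psd_mat_Pmat_sandwich[OF H, of \<eta> ts, folded A_def] x int cov
    by (intro integral_quadratic_form_le_trace) (auto simp: transpose_smult_mat)
  also have "\<dots> = \<sigma>\<^sup>2 * trace_mat (A * H)"
    using mult_smult_distrib[OF A H(1)] trace_mat_smult[OF mult_carrier_mat[OF A H(1)]] by simp
  also have "trace_mat (A * H) = (\<Sum>j<d. (lam j)\<^sup>2 * (\<Prod>t\<leftarrow>ts. 1 - \<eta> t * lam j)\<^sup>2)"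
    unfolding A_def by (rule trace_Pmat_sandwich[OF H(1) cp])
  finally show ?thesis
    unfolding A_def .
qed

lemma noise_carrier:
  "(\<And>s. bs s \<in> carrier_vec d) \<Longrightarrow> noise H b w0 \<eta> Hs bs \<xi> t \<omega> \<in> carrier_vec d"
  unfolding noise_def carrier_vec_def by simp

theorem lemma5:
  fixes M :: "'a measure" and S :: "'s measure"
    and \<xi> :: "nat \<Rightarrow> 'a \<Rightarrow> 's"
    and Hs :: "'s \<Rightarrow> real mat" and bs :: "'s \<Rightarrow> real vec"
    and H :: "real mat" and b :: "real vec" and w0 :: "real vec"
    and d T :: nat and \<eta> :: "nat \<Rightarrow> real" and \<sigma> :: real and lam :: "nat \<Rightarrow> real"
  assumes M: "prob_space M"
    and \<xi>_meas: "\<And>t. \<xi> t \<in> measurable M S"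
    and \<xi>_distr: "\<And>t. distr M S (\<xi> t) = S"
    and \<xi>_indep: "prob_space.indep_vars M (\<lambda>_. S) \<xi> UNIV"
    and Hs_carrier: "\<And>s. Hs s \<in> carrier_mat d d"
    and Hs_sym: "\<And>s. (Hs s)\<^sup>T = Hs s"
    and bs_carrier: "\<And>s. bs s \<in> carrier_vec d"
    and Hs_meas: "\<And>i j. i < d \<Longrightarrow> j < d \<Longrightarrow> (\<lambda>s. Hs s $$ (i, j)) \<in> borel_measurable S"
    and bs_meas: "\<And>i. i < d \<Longrightarrow> (\<lambda>s. bs s $ i) \<in> borel_measurable S"
    and Hs_int: "\<And>i j. i < d \<Longrightarrow> j < d \<Longrightarrow> integrable S (\<lambda>s. Hs s $$ (i, j))"
    and bs_int: "\<And>i. i < d \<Longrightarrow> integrable S (\<lambda>s. bs s $ i)"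
    and H_def: "H = mat d d (\<lambda>(i, j). integral\<^sup>L S (\<lambda>s. Hs s $$ (i, j)))"
    and b_def: "b = vec d (\<lambda>i. integral\<^sup>L S (\<lambda>s. bs s $ i))"
    and H_pd: "pos_def_mat d H"
    and w0_carrier: "w0 \<in> carrier_vec d"
    and noise_int: "\<And>t i j. t \<le> T \<Longrightarrow> i < d \<Longrightarrow> j < d \<Longrightarrow>
        integrable M (\<lambda>\<omega>. noise H b w0 \<eta> Hs bs \<xi> t \<omega> $ i * noise H b w0 \<eta> Hs bs \<xi> t \<omega> $ j)"
    and noise_cov: "\<And>t. t \<le> T \<Longrightarrow> loewner_le d
        (mat d d (\<lambda>(i, j). integral\<^sup>L M
            (\<lambda>\<omega>. noise H b w0 \<eta> Hs bs \<xi> t \<omega> $ i * noise H b w0 \<eta> Hs bs \<xi> t \<omega> $ j)))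
        (\<sigma>\<^sup>2 \<cdot>\<^sub>m H)"
    and eigenvalues: "char_poly H = (\<Prod>j<d. [:- lam j, 1:])"
  shows "(\<Sum>\<tau>\<le>T. integral\<^sup>L M (\<lambda>\<omega>. (\<eta> \<tau>)\<^sup>2 *
            (noise H b w0 \<eta> Hs bs \<xi> \<tau> \<omega> \<bullet>
              ((mprod d (map (Pmat d H \<eta>) (rev [Suc \<tau>..<Suc T])) * H
                  * mprod d (map (Pmat d H \<eta>) [Suc \<tau>..<Suc T]))
                *\<^sub>v noise H b w0 \<eta> Hs bs \<xi> \<tau> \<omega>))))
    \<le> \<sigma>\<^sup>2 * (\<Sum>j<d. (lam j)\<^sup>2 *
          (\<Sum>k\<le>T. (\<eta> k)\<^sup>2 * (\<Prod>i\<in>{Suc k..T}. (1 - \<eta> i * lam j)\<^sup>2)))"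
proof -
  have H: "H \<in> carrier_mat d d" "H\<^sup>T = H" "psd_mat d H"
    using H_pd pos_def_mat_imp_psd_mat unfolding pos_def_mat_def by auto
  have "(\<integral>\<omega>. (\<eta> \<tau>)\<^sup>2 * (noise H b w0 \<eta> Hs bs \<xi> \<tau> \<omega> \<bullet>
        ((mprod d (map (Pmat d H \<eta>) (rev [Suc \<tau>..<Suc T])) * H * mprod d (map (Pmat d H \<eta>) [Suc \<tau>..<Suc T]))
          *\<^sub>v noise H b w0 \<eta> Hs bs \<xi> \<tau> \<omega>)) \<partial>M)
      \<le> (\<eta> \<tau>)\<^sup>2 * (\<sigma>\<^sup>2 * (\<Sum>j<d. (lam j)\<^sup>2 * (\<Prod>i\<in>{Suc \<tau>..T}. (1 - \<eta> i * lam j)\<^sup>2)))"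
    if "\<tau> \<le> T" for \<tau>
    using integral_Pmat_sandwich_le[OF H eigenvalues noise_carrier[OF bs_carrier] noise_int[OF that]
        noise_cov[OF that], of \<eta> "[Suc \<tau>..<Suc T]"]
    by (simp add: mult_left_mono prod_list_map_upt atLeastLessThanSuc_atLeastAtMost prod_power_distrib
        del: upt_Suc)
  then have "(\<Sum>\<tau>\<le>T. \<integral>\<omega>. (\<eta> \<tau>)\<^sup>2 * (noise H b w0 \<eta> Hs bs \<xi> \<tau> \<omega> \<bullet>
        ((mprod d (map (Pmat d H \<eta>) (rev [Suc \<tau>..<Suc T])) * H * mprod d (map (Pmat d H \<eta>) [Suc \<tau>..<Suc T]))
          *\<^sub>v noise H b w0 \<eta> Hs bs \<xi> \<tau> \<omega>)) \<partial>M)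
      \<le> (\<Sum>\<tau>\<le>T. (\<eta> \<tau>)\<^sup>2 * (\<sigma>\<^sup>2 * (\<Sum>j<d. (lam j)\<^sup>2 * (\<Prod>i\<in>{Suc \<tau>..T}. (1 - \<eta> i * lam j)\<^sup>2))))"
    by (intro sum_mono) simp
  also have "\<dots> = \<sigma>\<^sup>2 * (\<Sum>j<d. (lam j)\<^sup>2 * (\<Sum>k\<le>T. (\<eta> k)\<^sup>2 * (\<Prod>i\<in>{Suc k..T}. (1 - \<eta> i * lam j)\<^sup>2)))"
    unfolding sum_distrib_left by (subst sum.swap) (simp add: mult_ac)
  finally show ?thesis .
qed

end
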